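(* Let $n\ge 1$ and $1\le p\le n$. The number $F(n;p)$ of $\alpha\in\mathcal{ORCT}_n$ with $h(\alpha)=p$ equals $2(n-p+1)\binom{n-1}{p-1}$ if $p>1$, and equals $n$ if $p=1$.
   Context: $X_n=\{1,2,\dots,n\}$ with its usual order; maps are written on the right ($x\alpha$). A map $\alpha:X_n\to X_n$ is order-preserving if $x\le y$ implies $x\alpha\le y\alpha$, order-reversing if $x\le y$ implies $x\alpha\ge y\alpha$, and a contraction if $|x\alpha-y\alpha|\le|x-y|$ for all $x,y$. $\mathcal{ORCT}_n$ is the set of all maps $X_n\to X_n$ (defined on all of $X_n$) that are contractions and are either order-preserving or order-reversing. Height $h(\alpha)=|\mathrm{Im}\,\alpha|$. *)

theory Defs
  imports Main "HOL-Library.FuncSet"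
begin

text \<open>Full transformations of X_n = {1..n}, represented as extensional functions
  (value undefined outside {1..n}), so each map corresponds to exactly one HOL function.\<close>

definition order_preserving :: "nat \<Rightarrow> (nat \<Rightarrow> nat) \<Rightarrow> bool" where
  "order_preserving n f \<longleftrightarrow> (\<forall>x\<in>{1..n}. \<forall>y\<in>{1..n}. x \<le> y \<longrightarrow> f x \<le> f y)"

definition order_reversing :: "nat \<Rightarrow> (nat \<Rightarrow> nat) \<Rightarrow> bool" where
  "order_reversing n f \<longleftrightarrow> (\<forall>x\<in>{1..n}. \<forall>y\<in>{1..n}. x \<le> y \<longrightarrow> f x \<ge> f y)"

definition contraction :: "nat \<Rightarrow> (nat \<Rightarrow> nat) \<Rightarrow> bool" where
  "contraction n f \<longleftrightarrow>
     (\<forall>x\<in>{1..n}. \<forall>y\<in>{1..n}. \<bar>int (f x) - int (f y)\<bar> \<le> \<bar>int x - int y\<bar>)"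

definition ORCT :: "nat \<Rightarrow> (nat \<Rightarrow> nat) set" where
  "ORCT n = {f \<in> {1..n} \<rightarrow>\<^sub>E {1..n}.
              contraction n f \<and> (order_preserving n f \<or> order_reversing n f)}"

definition height :: "nat \<Rightarrow> (nat \<Rightarrow> nat) \<Rightarrow> nat" where
  "height n f = card (f ` {1..n})"

definition F :: "nat \<Rightarrow> nat \<Rightarrow> nat" where
  "F n p = card {f \<in> ORCT n. height n f = p}"

end

theory Submission
  imports Defs
begin

text \<open>An order-preserving contraction of \<open>{1..n}\<close> climbs by steps of 0 or 1, so it is
  determined by its starting value \<open>a\<close> and the set \<open>S \<subseteq> {1..<n}\<close> of points after which it
  climbs; its image is then the interval \<open>{a..a + card S}\<close>. Height \<open>p\<close> forces \<open>card S = p - 1\<close>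
  and \<open>a \<le> n - p + 1\<close>, giving \<open>(n - p + 1) * (n - 1 choose (p - 1))\<close> such maps. The reflection
  \<open>x \<mapsto> n + 1 - x\<close> of the codomain turns them bijectively into the order-reversing
  contractions of the same height, and for \<open>p > 1\<close> no map is both order-preserving and
  order-reversing, which doubles the count; for \<open>p = 1\<close> all \<open>n\<close> constant maps are of both kinds.\<close>

section \<open>Order-preserving contractions climb by unit steps\<close>

definition unit_steps :: "nat \<Rightarrow> (nat \<Rightarrow> nat) \<Rightarrow> bool" where
  "unit_steps n f \<longleftrightarrow> (\<forall>i\<in>{1..<n}. f (Suc i) = f i \<or> f (Suc i) = Suc (f i))"

lemma unit_steps_bounds:
  assumes "unit_steps n f" "1 \<le> x" "x \<le> y" "y \<le> n"
  shows "f x \<le> f y \<and> f y \<le> f x + (y - x)"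
  using assms(3,4)
proof (induction y rule: dec_induct)
  case base
  then show ?case by simp
next
  case (step m)
  have "f (Suc m) = f m \<or> f (Suc m) = Suc (f m)"
    using assms(1,2) step by (simp add: unit_steps_def)
  with step show ?case by auto
qed

lemma contraction_order_preserving_iff_unit_steps:
  "contraction n f \<and> order_preserving n f \<longleftrightarrow> unit_steps n f"
proof
  assume f: "contraction n f \<and> order_preserving n f"
  show "unit_steps n f"
    unfolding unit_steps_def
  proof
    fix i assume i: "i \<in> {1..<n}"
    then have "i \<in> {1..n}" "Suc i \<in> {1..n}" by auto
    then have "f i \<le> f (Suc i)" "\<bar>int (f (Suc i)) - int (f i)\<bar> \<le> \<bar>int (Suc i) - int i\<bar>"
      using f unfolding order_preserving_def contraction_def by (meson le_SucI order_refl)+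
    then show "f (Suc i) = f i \<or> f (Suc i) = Suc (f i)" by auto
  qed
next
  assume f: "unit_steps n f"
  have "order_preserving n f"
    unfolding order_preserving_def using unit_steps_bounds[OF f] by auto
  moreover have "contraction n f"
    unfolding contraction_def
  proof (intro ballI)
    fix x y assume xy: "x \<in> {1..n}" "y \<in> {1..n}"
    show "\<bar>int (f x) - int (f y)\<bar> \<le> \<bar>int x - int y\<bar>"
    proof (cases "x \<le> y")
      case True
      then show ?thesis using unit_steps_bounds[OF f, of x y] xy by auto
    next
      case False
      then show ?thesis using unit_steps_bounds[OF f, of y x] xy by auto
    qed
  qed
  ultimately show "contraction n f \<and> order_preserving n f" by simp
qed

lemma unit_steps_image:
  assumes "unit_steps n f" "1 \<le> m" "m \<le> n"
  shows "f ` {1..m} = {f 1..f m}"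
  using assms(2,3)
proof (induction m rule: dec_induct)
  case base
  then show ?case by simp
next
  case (step m)
  have "{1..Suc m} = insert (Suc m) {1..m}"
    using step by auto
  then have "f ` {1..Suc m} = insert (f (Suc m)) {f 1..f m}"
    using step by simp
  also have "\<dots> = {f 1..f (Suc m)}"
  proof -
    have "f (Suc m) = f m \<or> f (Suc m) = Suc (f m)"
      using assms(1) step by (simp add: unit_steps_def)
    moreover have "f 1 \<le> f m"
      using unit_steps_bounds[OF assms(1), of 1 m] step by simp
    ultimately show ?thesis
      by auto
  qed
  finally show ?case .
qed

section \<open>Encoding by starting value and jump set\<close>

definition jump_map :: "nat \<Rightarrow> nat \<Rightarrow> nat set \<Rightarrow> nat \<Rightarrow> nat" where
  "jump_map n a S = (\<lambda>x. if x \<in> {1..n} then a + card {j\<in>S. j < x} else undefined)"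

lemma card_less_Suc_filter:
  assumes "finite S"
  shows "card {j\<in>S. j < Suc i} = card {j\<in>S. j < i} + (if i \<in> S then 1 else 0)"
proof -
  have "{j\<in>S. j < Suc i} = (if i \<in> S then insert i {j\<in>S. j < i} else {j\<in>S. j < i})"
    by (auto simp: less_Suc_eq)
  then show ?thesis
    using assms by simp
qed

lemma jump_map_Suc:
  assumes "S \<subseteq> {1..<n}" "i \<in> {1..<n}"
  shows "jump_map n a S (Suc i) = jump_map n a S i + (if i \<in> S then 1 else 0)"
  using assms card_less_Suc_filter[OF finite_subset[OF assms(1)]] by (simp add: jump_map_def)

lemma jump_map_1: "1 \<le> n \<Longrightarrow> S \<subseteq> {1..<n} \<Longrightarrow> jump_map n a S 1 = a"
proof -
  assume "1 \<le> n" "S \<subseteq> {1..<n}"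
  then have "{j\<in>S. j < 1} = {}" by auto
  with \<open>1 \<le> n\<close> show ?thesis by (simp add: jump_map_def)
qed

lemma jump_map_last: "1 \<le> n \<Longrightarrow> S \<subseteq> {1..<n} \<Longrightarrow> jump_map n a S n = a + card S"
proof -
  assume "1 \<le> n" "S \<subseteq> {1..<n}"
  then have "{j\<in>S. j < n} = S" by auto
  with \<open>1 \<le> n\<close> show ?thesis by (simp add: jump_map_def)
qed

lemma unit_steps_jump_map: "S \<subseteq> {1..<n} \<Longrightarrow> unit_steps n (jump_map n a S)"
  by (simp add: unit_steps_def jump_map_Suc)

lemma image_jump_map:
  assumes "1 \<le> n" "S \<subseteq> {1..<n}"
  shows "jump_map n a S ` {1..n} = {a..a + card S}"
  using unit_steps_image[OF unit_steps_jump_map[OF assms(2)] assms(1) order_refl]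
  by (simp only: jump_map_1[OF assms] jump_map_last[OF assms])

lemma unit_steps_eq_jump_map:
  assumes f: "unit_steps n f" "f \<in> {1..n} \<rightarrow>\<^sub>E B"
  defines "S \<equiv> {i\<in>{1..<n}. f (Suc i) = Suc (f i)}"
  shows "f = jump_map n (f 1) S"
proof -
  define a where "a = f 1"
  have S: "S \<subseteq> {1..<n}" unfolding S_def by auto
  have on_domain: "f x = jump_map n a S x" if "1 \<le> x" "x \<le> n" for x
    using that
  proof (induction x rule: dec_induct)
    case base
    then show ?case using jump_map_1[OF _ S] by (simp add: a_def)
  next
    case (step m)
    then have m: "m \<in> {1..<n}" by simp
    then have "f (Suc m) = f m + (if m \<in> S then 1 else 0)"
      using f(1) unfolding unit_steps_def S_def by auto
    then show ?case
      using step m jump_map_Suc[OF S m] by simp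
  qed
  have "f = jump_map n a S"
  proof
    fix x
    show "f x = jump_map n a S x"
      using on_domain PiE_arb[OF f(2)] by (cases "x \<in> {1..n}") (auto simp: jump_map_def)
  qed
  then show ?thesis
    by (simp only: a_def)
qed

lemma inj_on_jump_map:
  assumes "1 \<le> n"
  shows "inj_on (\<lambda>(a, S). jump_map n a S) {(a, S). S \<subseteq> {1..<n}}"
proof (rule inj_onI, clarify)
  fix a S b T
  assume S: "S \<subseteq> {1..<n}" and T: "T \<subseteq> {1..<n}" and eq: "jump_map n a S = jump_map n b T"
  have "a = b"
    using eq jump_map_1[OF assms S] jump_map_1[OF assms T] by metis
  moreover have "i \<in> S \<longleftrightarrow> i \<in> T" if "i \<in> {1..<n}" for i
    using jump_map_Suc[OF S that, of a] jump_map_Suc[OF T that, of b] eq by (auto split: if_splits)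
  then have "S = T"
    using S T by blast
  ultimately show "a = b \<and> S = T" ..
qed

definition OCT :: "nat \<Rightarrow> (nat \<Rightarrow> nat) set" where
  "OCT n = {f \<in> {1..n} \<rightarrow>\<^sub>E {1..n}. contraction n f \<and> order_preserving n f}"

lemma OCT_height_eq_image_jump_map:
  assumes "1 \<le> n" "1 \<le> p" "p \<le> n"
  shows "{f \<in> OCT n. height n f = p}
    = (\<lambda>(a, S). jump_map n a S) ` ({1..n - p + 1} \<times> {S. S \<subseteq> {1..<n} \<and> card S = p - 1})"
    (is "?H = ?g ` ?D")
proof
  show "?g ` ?D \<subseteq> ?H"
  proof (rule image_subsetI)
    fix aS assume "aS \<in> ?D"
    then obtain a S where aS: "aS = (a, S)"
      and a: "a \<in> {1..n - p + 1}" and S: "S \<subseteq> {1..<n}" "card S = p - 1"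
      by blast
    have im: "jump_map n a S ` {1..n} = {a..a + card S}"
      using image_jump_map[OF assms(1) S(1)] .
    have "jump_map n a S x \<in> {1..n}" if "x \<in> {1..n}" for x
    proof -
      have "jump_map n a S x \<in> {a..a + card S}"
        using im that by blast
      then show ?thesis
        using a S assms by auto
    qed
    then have "jump_map n a S \<in> {1..n} \<rightarrow>\<^sub>E {1..n}"
      by (auto simp: jump_map_def)
    moreover have "height n (jump_map n a S) = p"
      using im S assms by (simp add: height_def)
    ultimately show "?g aS \<in> ?H"
      using unit_steps_jump_map[OF S(1)] contraction_order_preserving_iff_unit_steps
      by (simp add: aS OCT_def)
  qed
next
  show "?H \<subseteq> ?g ` ?D"
  proof
    fix f assume "f \<in> ?H"
    then have f: "unit_steps n f" "f \<in> {1..n} \<rightarrow>\<^sub>E {1..n}" "height n f = p"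
      using contraction_order_preserving_iff_unit_steps by (auto simp: OCT_def)
    define S where "S = {i\<in>{1..<n}. f (Suc i) = Suc (f i)}"
    have S: "S \<subseteq> {1..<n}" unfolding S_def by auto
    have f_eq: "f = jump_map n (f 1) S"
      unfolding S_def by (rule unit_steps_eq_jump_map[OF f(1,2)])
    have "jump_map n (f 1) S ` {1..n} = {f 1..f 1 + card S}"
      by (rule image_jump_map[OF assms(1) S])
    then have "f ` {1..n} = {f 1..f 1 + card S}"
      by (simp only: f_eq[symmetric])
    moreover have "f ` {1..n} \<subseteq> {1..n}" "f 1 \<in> f ` {1..n}"
      using f(2) assms(1) by auto
    ultimately have "card S = p - 1" "f 1 \<in> {1..n - p + 1}"
      using f(3) unfolding height_def by auto
    with S have "?g (f 1, S) \<in> ?g ` ?D"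
      by (intro imageI) simp
    then show "f \<in> ?g ` ?D"
      by (simp only: case_prod_conv f_eq[symmetric])
  qed
qed

lemma card_OCT_height:
  assumes "1 \<le> n" "1 \<le> p" "p \<le> n"
  shows "card {f \<in> OCT n. height n f = p} = (n - p + 1) * (n - 1 choose (p - 1))"
proof -
  have "inj_on (\<lambda>(a, S). jump_map n a S) ({1..n - p + 1} \<times> {S. S \<subseteq> {1..<n} \<and> card S = p - 1})"
    by (rule inj_on_subset[OF inj_on_jump_map[OF assms(1)]]) auto
  then show ?thesis
    unfolding OCT_height_eq_image_jump_map[OF assms]
    by (simp add: card_image card_cartesian_product n_subsets)
qed

section \<open>Reflection of the codomain\<close>

definition reflect :: "nat \<Rightarrow> (nat \<Rightarrow> nat) \<Rightarrow> nat \<Rightarrow> nat" where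
  "reflect n f = (\<lambda>x. if x \<in> {1..n} then Suc n - f x else undefined)"

lemma reflect_PiE:
  assumes "f \<in> {1..n} \<rightarrow>\<^sub>E {1..n}"
  shows "reflect n f \<in> {1..n} \<rightarrow>\<^sub>E {1..n}"
proof (rule PiE_I)
  fix x assume "x \<in> {1..n}"
  with PiE_mem[OF assms this] show "reflect n f x \<in> {1..n}"
    by (auto simp: reflect_def)
next
  fix x assume "x \<notin> {1..n}"
  then show "reflect n f x = undefined"
    unfolding reflect_def by (rule if_not_P)
qed

lemma reflect_reflect:
  assumes "f \<in> {1..n} \<rightarrow>\<^sub>E {1..n}"
  shows "reflect n (reflect n f) = f"
proof
  fix x
  show "reflect n (reflect n f) x = f x"
  proof (cases "x \<in> {1..n}")
    case True
    with PiE_mem[OF assms True] show ?thesis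
      by (simp add: reflect_def)
  next
    case False
    then show ?thesis
      using PiE_arb[OF assms False] by (simp only: reflect_def if_False)
  qed
qed

lemma int_reflect:
  assumes "f \<in> {1..n} \<rightarrow>\<^sub>E {1..n}" "x \<in> {1..n}"
  shows "int (reflect n f x) = int n + 1 - int (f x)"
  using PiE_mem[OF assms] assms(2) by (simp add: reflect_def of_nat_diff)

lemma contraction_reflect:
  "f \<in> {1..n} \<rightarrow>\<^sub>E {1..n} \<Longrightarrow> contraction n (reflect n f) \<longleftrightarrow> contraction n f"
  by (simp add: contraction_def int_reflect abs_minus_commute)

lemma reflect_le_reflect_iff:
  assumes "f \<in> {1..n} \<rightarrow>\<^sub>E {1..n}" "x \<in> {1..n}" "y \<in> {1..n}"
  shows "reflect n f x \<le> reflect n f y \<longleftrightarrow> f y \<le> f x"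
  using int_reflect[OF assms(1,2)] int_reflect[OF assms(1,3)] by linarith

lemma order_preserving_reflect:
  "f \<in> {1..n} \<rightarrow>\<^sub>E {1..n} \<Longrightarrow> order_preserving n (reflect n f) \<longleftrightarrow> order_reversing n f"
  by (simp add: order_preserving_def order_reversing_def reflect_le_reflect_iff)

lemma order_reversing_reflect:
  "f \<in> {1..n} \<rightarrow>\<^sub>E {1..n} \<Longrightarrow> order_reversing n (reflect n f) \<longleftrightarrow> order_preserving n f"
  by (simp add: order_preserving_def order_reversing_def reflect_le_reflect_iff)

lemma height_reflect:
  assumes "f \<in> {1..n} \<rightarrow>\<^sub>E {1..n}"
  shows "height n (reflect n f) = height n f"
proof -
  have "reflect n f ` {1..n} = (\<lambda>v. Suc n - v) ` f ` {1..n}"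
    unfolding image_image by (rule image_cong) (simp_all add: reflect_def)
  moreover have "inj_on (\<lambda>v. Suc n - v) {1..n}"
    by (rule inj_onI) auto
  moreover have "f ` {1..n} \<subseteq> {1..n}"
    using PiE_mem[OF assms] by blast
  ultimately show ?thesis
    by (simp add: height_def card_image inj_on_subset)
qed

lemma reflect_OCT_iff:
  assumes "f \<in> {1..n} \<rightarrow>\<^sub>E {1..n}"
  shows "reflect n f \<in> OCT n \<longleftrightarrow> contraction n f \<and> order_reversing n f"
  using assms reflect_PiE[OF assms]
  by (simp add: OCT_def contraction_reflect order_preserving_reflect)

lemma ORCT_height_eq:
  "{f \<in> ORCT n. height n f = p}
    = {f \<in> OCT n. height n f = p} \<union> reflect n ` {f \<in> OCT n. height n f = p}"
    (is "?L = ?H \<union> reflect n ` ?H")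
proof (intro equalityI subsetI)
  fix f assume f: "f \<in> ?L"
  then have fP: "f \<in> {1..n} \<rightarrow>\<^sub>E {1..n}"
    by (simp add: ORCT_def)
  show "f \<in> ?H \<union> reflect n ` ?H"
  proof (cases "order_preserving n f")
    case True
    with f show ?thesis
      by (simp add: ORCT_def OCT_def)
  next
    case False
    with f have "reflect n f \<in> ?H"
      by (simp add: ORCT_def reflect_OCT_iff[OF fP] height_reflect[OF fP])
    then have "reflect n (reflect n f) \<in> reflect n ` ?H"
      by (rule imageI)
    then show ?thesis
      by (simp add: reflect_reflect[OF fP])
  qed
next
  fix f assume "f \<in> ?H \<union> reflect n ` ?H"
  then consider "f \<in> ?H" | g where "g \<in> ?H" "f = reflect n g"
    by blast
  then show "f \<in> ?L"
  proof cases
    case 1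
    then show ?thesis
      by (simp add: ORCT_def OCT_def)
  next
    case 2
    then have gP: "g \<in> {1..n} \<rightarrow>\<^sub>E {1..n}"
      and g: "contraction n g" "order_preserving n g" "height n g = p"
      by (simp_all add: OCT_def)
    with 2 reflect_PiE[OF gP] show ?thesis
      by (simp add: ORCT_def contraction_reflect[OF gP] order_reversing_reflect[OF gP]
          height_reflect[OF gP])
  qed
qed

lemma height_eq_1_if_order_preserving_reversing:
  assumes "1 \<le> n" "order_preserving n f" "order_reversing n f"
  shows "height n f = 1"
proof -
  have const: "f x = f 1" if "x \<in> {1..n}" for x
  proof -
    have "1 \<in> {1..n}" "1 \<le> x"
      using assms(1) that by auto
    then have "f 1 \<le> f x" "f x \<le> f 1"
      using assms(2,3) that unfolding order_preserving_def order_reversing_def by blast+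
    then show ?thesis
      by (rule antisym[rotated])
  qed
  have "f ` {1..n} = (\<lambda>_. f 1) ` {1..n}"
    by (rule image_cong[OF refl const])
  also have "\<dots> = {f 1}"
    using assms(1) by (intro image_constant[of 1]) simp
  finally show ?thesis
    by (simp add: height_def)
qed

lemma order_preserving_if_height_eq_1:
  assumes "height n f = 1"
  shows "order_preserving n f"
proof -
  obtain c where "f ` {1..n} = {c}"
    using assms card_1_singletonE unfolding height_def by blast
  then have "f x = c" if "x \<in> {1..n}" for x
    using that by blast
  then show ?thesis
    by (simp add: order_preserving_def)
qed

lemma OCT_height_disjoint_reflect:
  assumes "1 \<le> n" "p > 1"
  shows "{f \<in> OCT n. height n f = p} \<inter> reflect n ` {f \<in> OCT n. height n f = p} = {}"
proof -
  have False if "g \<in> OCT n" "height n g = p" "f \<in> OCT n" "g = reflect n f" for f g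
  proof -
    have "f \<in> {1..n} \<rightarrow>\<^sub>E {1..n}" "order_preserving n f" "order_preserving n g"
      using that by (simp_all add: OCT_def)
    then have "order_reversing n g" "order_preserving n g"
      using that(4) order_reversing_reflect by blast+
    then show False
      using height_eq_1_if_order_preserving_reversing[OF assms(1)] that(2) assms(2) by simp
  qed
  then show ?thesis
    by blast
qed

lemma inj_on_reflect: "inj_on (reflect n) ({1..n} \<rightarrow>\<^sub>E {1..n})"
  by (rule inj_on_inverseI[where g = "reflect n"]) (rule reflect_reflect)

theorem corollary3p4:
  fixes n p :: nat
  assumes "1 \<le> n" and "1 \<le> p" and "p \<le> n"
  shows "F n p = (if p > 1 then 2 * (n - p + 1) * (n - 1 choose (p - 1)) else n)"
proof (cases "p > 1")
  case True
  let ?H = "{f \<in> OCT n. height n f = p}"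
  have H: "?H \<subseteq> {1..n} \<rightarrow>\<^sub>E {1..n}"
    by (auto simp: OCT_def)
  then have "finite ?H"
    by (rule finite_subset) (simp add: finite_PiE)
  moreover have "card (reflect n ` ?H) = card ?H"
    using inj_on_subset[OF inj_on_reflect H] by (rule card_image)
  ultimately have "F n p = 2 * card ?H"
    unfolding F_def ORCT_height_eq
    by (simp add: card_Un_disjoint OCT_height_disjoint_reflect[OF assms(1) True])
  with True show ?thesis
    by (simp add: card_OCT_height[OF assms])
next
  case False
  then have "p = 1"
    using assms(2) by simp
  then have "F n p = card {f \<in> OCT n. height n f = p}"
    using order_preserving_if_height_eq_1
    by (auto simp: F_def ORCT_def OCT_def intro!: arg_cong[where f = card])
  also have "\<dots> = n"
    using card_OCT_height[OF assms] \<open>p = 1\<close> assms(1) by simp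
  finally show ?thesis
    using False by simp
qed

end
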